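(* In the second toy theory described in the context, fix any initial (pure or mixed) state and any finite sequence $Y_1,\dots,Y_m$ of Bob's measurements ($Y_k\in\{B_1,B_2\}$). Consider any finite sequence of Alice's measurements (each in $\{A_1,A_2\}$, possibly empty) and any interleaving of it with $Y_1,\dots,Y_m$ into a single sequence of measurements performed one after another. Then the joint probability distribution of the outcomes of $Y_1,\dots,Y_m$ does not depend on Alice's sequence or on the interleaving (in particular it equals the distribution obtained when Alice performs no measurement). The same holds with the roles of Alice and Bob exchanged.
   Context: Second toy theory. Let $V=\{\emptyset,-,+,\ominus,\oplus\}$ be the set of hidden values. A pure state is a quadruple $a_1^{v_1}a_2^{v_2}b_1^{v_3}b_2^{v_4}$ with $v_1,\dots,v_4\in V$, where $v_1,v_2,v_3,v_4$ are the hidden values of the observables $A_1,A_2,B_1,B_2$ respectively. A hidden value $\emptyset$ is called undetermined, $-$ and $+$ are potential values $-1$ and $+1$, and $\ominus,\oplus$ are actual values $-1$ and $+1$. A mixed state is a probability distribution over pure states; measurements act on mixed states by linearity (first sample a pure state, then apply the rules below). $A_1,A_2$ are Alice's observables, $B_1,B_2$ are Bob's; for $X$ one of them, the other observable of the same party is called its partner. Measuring a $\pm1$-valued observable $X$ on a pure state: (1) Outcome: if the hidden value of $X$ is $\emptyset$, the outcome is $\pm1$ with probability $1/2$ each; if it is $+$ or $\oplus$ the outcome is $+1$ with certainty; if it is $-$ or $\ominus$ the outcome is $-1$ with certainty. (2) Post-measurement state when the pre-measurement state is not $a_1^\emptyset a_2^\emptyset b_1^\emptyset b_2^\emptyset$: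 the hidden value of $X$ becomes the actual value of the outcome ($\oplus$ for $+1$, $\ominus$ for $-1$); if the partner of $X$ has a potential value ($+$ or $-$), this potential value flips sign with probability $1/2$ (independently), otherwise it is unchanged; the hidden values of the other party's two observables are unchanged. (3) Post-measurement state when the pre-measurement state is $a_1^\emptyset a_2^\emptyset b_1^\emptyset b_2^\emptyset$ (each outcome having probability $1/2$): measuring $A_1$ gives $a_1^\ominus a_2^\emptyset b_1^- b_2^-$ on outcome $-1$ and $a_1^\oplus a_2^\emptyset b_1^+ b_2^+$ on outcome $+1$; measuring $A_2$ gives $a_1^\emptyset a_2^\ominus b_1^- b_2^+$ on $-1$ and $a_1^\emptyset a_2^\oplus b_1^+ b_2^-$ on $+1$; measuring $B_1$ gives $a_1^- a_2^- b_1^\ominus b_2^\emptyset$ on $-1$ and $a_1^+ a_2^+ b_1^\oplus b_2^\emptyset$ on $+1$; measuring $B_2$ gives $a_1^- a_2^+ b_1^\emptyset b_2^\ominus$ on $-1$ and $a_1^+ a_2^- b_1^\emptyset b_2^\oplus$ on $+1$. *)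

theory Defs
  imports "HOL-Probability.Probability"
begin

text \<open>Hidden values: undetermined, potential -1/+1, actual -1/+1.\<close>
datatype hv = Und | PotM | PotP | ActM | ActP

datatype obs = A1 | A2 | B1 | B2

type_synonym state = "obs \<Rightarrow> hv"

definition is_Alice :: "obs \<Rightarrow> bool" where
  "is_Alice X \<longleftrightarrow> X = A1 \<or> X = A2"

definition is_Bob :: "obs \<Rightarrow> bool" where
  "is_Bob X \<longleftrightarrow> X = B1 \<or> X = B2"

fun partner :: "obs \<Rightarrow> obs" where
  "partner A1 = A2" | "partner A2 = A1" | "partner B1 = B2" | "partner B2 = B1"

fun flip_pot :: "hv \<Rightarrow> hv" where
  "flip_pot PotM = PotP" | "flip_pot PotP = PotM" | "flip_pot v = v"

definition act :: "int \<Rightarrow> hv" where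
  "act r = (if r = 1 then ActP else ActM)"

definition mk :: "hv \<Rightarrow> hv \<Rightarrow> hv \<Rightarrow> hv \<Rightarrow> state" where
  "mk v1 v2 v3 v4 = (\<lambda>X. case X of A1 \<Rightarrow> v1 | A2 \<Rightarrow> v2 | B1 \<Rightarrow> v3 | B2 \<Rightarrow> v4)"

definition all_und :: state where
  "all_und = mk Und Und Und Und"

fun post_und :: "obs \<Rightarrow> int \<Rightarrow> state" where
  "post_und A1 r = (if r = 1 then mk ActP Und PotP PotP else mk ActM Und PotM PotM)"
| "post_und A2 r = (if r = 1 then mk Und ActP PotP PotM else mk Und ActM PotM PotP)"
| "post_und B1 r = (if r = 1 then mk PotP PotP ActP Und else mk PotM PotM ActM Und)"
| "post_und B2 r = (if r = 1 then mk PotP PotM Und ActP else mk PotM PotP Und ActM)"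

definition fair_sign :: "int pmf" where
  "fair_sign = pmf_of_set {-1, 1}"

definition outcome_dist :: "hv \<Rightarrow> int pmf" where
  "outcome_dist v = (case v of Und \<Rightarrow> fair_sign
                      | PotP \<Rightarrow> return_pmf 1 | ActP \<Rightarrow> return_pmf 1
                      | PotM \<Rightarrow> return_pmf (-1) | ActM \<Rightarrow> return_pmf (-1))"

definition measure_pure :: "obs \<Rightarrow> state \<Rightarrow> (int \<times> state) pmf" where
  "measure_pure X s =
     (if s = all_und then
        map_pmf (\<lambda>r. (r, post_und X r)) fair_sign
      else
        bind_pmf (outcome_dist (s X)) (\<lambda>r.
        map_pmf (\<lambda>f. (r, (s(X := act r))(partner X :=
                        (if f then flip_pot (s (partner X)) else s (partner X)))))
          (bernoulli_pmf (1/2))))"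

fun run_pure :: "obs list \<Rightarrow> state \<Rightarrow> int list pmf" where
  "run_pure [] s = return_pmf []"
| "run_pure (X # xs) s =
     bind_pmf (measure_pure X s) (\<lambda>(r, s'). map_pmf (\<lambda>os. r # os) (run_pure xs s'))"

text \<open>Mixed state = pmf over pure states; measurements act by linearity.\<close>
definition run :: "obs list \<Rightarrow> state pmf \<Rightarrow> int list pmf" where
  "run xs p = bind_pmf p (run_pure xs)"

definition party_outcomes :: "(obs \<Rightarrow> bool) \<Rightarrow> obs list \<Rightarrow> int list \<Rightarrow> int list" where
  "party_outcomes P xs os = map snd (filter (\<lambda>(X, _). P X) (zip xs os))"

end

theory Submission
  imports Defs
begin

(* Idea: the outcome statistics of one party's measurements depend only on the two hidden
   values of that party, and an undetermined hidden value is statistically indistinguishable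
   from a potential value chosen by a fair coin. *)

abbreviation coin :: "(bool \<Rightarrow> 'a pmf) \<Rightarrow> 'a pmf" where
  "coin g \<equiv> bind_pmf (bernoulli_pmf (1/2)) g"

lemma coin_negate: "coin (\<lambda>b. g (\<not> b)) = coin g"
proof -
  have "map_pmf Not (pmf_of_set (UNIV::bool set)) = pmf_of_set (Not ` UNIV)"
    by (rule map_pmf_of_set_inj) (auto simp: inj_def)
  moreover have "Not ` (UNIV::bool set) = UNIV" by auto
  ultimately have "map_pmf Not (bernoulli_pmf (1/2)) = bernoulli_pmf (1/2)"
    by (simp add: bernoulli_pmf_half_conv_pmf_of_set)
  then show ?thesis by (metis bind_map_pmf)
qed

lemma coin_xor: "coin (\<lambda>f. g (d \<noteq> f)) = coin g"
  by (cases d) (simp_all add: coin_negate)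

lemma coin_iff: "coin (\<lambda>b. g (b = c)) = coin g"
  by (cases c) (simp_all add: coin_negate)

definition sign_of :: "bool \<Rightarrow> int" where "sign_of b = (if b then 1 else -1)"
definition pot :: "bool \<Rightarrow> hv" where "pot b = (if b then PotP else PotM)"

lemma fair_sign_as_coin: "bind_pmf fair_sign g = coin (\<lambda>b. g (sign_of b))"
proof -
  have "map_pmf sign_of (pmf_of_set UNIV) = pmf_of_set (range sign_of)"
    by (rule map_pmf_of_set_inj) (auto simp: inj_on_def sign_of_def)
  moreover have "range sign_of = {-1, 1}" by (auto simp: sign_of_def)
  ultimately have "fair_sign = map_pmf sign_of (bernoulli_pmf (1/2))"
    by (simp add: bernoulli_pmf_half_conv_pmf_of_set fair_sign_def)
  then show ?thesis by (simp only: \<open>fair_sign = _\<close> bind_map_pmf)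
qed

lemma outcome_dist_pot [simp]: "outcome_dist (pot c) = return_pmf (sign_of c)"
  by (cases c) (simp_all add: outcome_dist_def pot_def sign_of_def)

lemma outcome_dist_Und [simp]: "outcome_dist Und = fair_sign"
  by (simp add: outcome_dist_def)

definition flip_when :: "bool \<Rightarrow> hv \<Rightarrow> hv" where
  "flip_when f v = (if f then flip_pot v else v)"

lemma flip_when_Und [simp]: "flip_when f Und = Und"
  by (simp add: flip_when_def)

lemma flip_when_pot [simp]: "flip_when f (pot c) = pot (c \<noteq> f)"
  by (cases f; cases c) (simp_all add: flip_when_def pot_def)

text \<open>The list entry \<open>True\<close> means "measure the first
  observable" (hidden value \<open>a\<close>), \<open>False\<close> "measure its partner" (hidden value \<open>b\<close>); each
  measurement yields an outcome, makes the measured value actual, and flips the partner's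
  potential value with probability 1/2.\<close>

fun local_run :: "bool list \<Rightarrow> hv \<Rightarrow> hv \<Rightarrow> int list pmf" where
  "local_run [] a b = return_pmf []"
| "local_run (True # ms) a b =
     bind_pmf (outcome_dist a) (\<lambda>r. coin (\<lambda>f.
       map_pmf ((#) r) (local_run ms (act r) (flip_when f b))))"
| "local_run (False # ms) a b =
     bind_pmf (outcome_dist b) (\<lambda>r. coin (\<lambda>f.
       map_pmf ((#) r) (local_run ms (flip_when f a) (act r))))"

lemma local_run_swap: "local_run (map Not ms) b a = local_run ms a b"
proof (induction ms arbitrary: a b)
  case (Cons m ms)
  then show ?case by (cases m) simp_all
qed simp

text \<open>An undetermined value is equivalent to a potential value chosen by a fair coin: measuring
  it gives a fair outcome, and the partner's random flips wash out any dependence on it.\<close>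

lemma local_run_Und_left: "local_run ms Und b = coin (\<lambda>c. local_run ms (pot c) b)"
proof (induction ms arbitrary: b)
  case Nil
  then show ?case by simp
next
  case (Cons m ms)
  show ?case
  proof (cases m)
    case True
    then show ?thesis by (simp add: fair_sign_as_coin bind_return_pmf)
  next
    case False
    let ?L = "\<lambda>r c. map_pmf ((#) r) (local_run ms (pot c) (act r))"
    have xor: "coin (\<lambda>c. coin (\<lambda>f. ?L r (c \<noteq> f))) = coin (?L r)" for r
      by (simp only: coin_xor[of "?L r"] bind_pmf_const)
    have "coin (\<lambda>c. local_run (m # ms) (pot c) b)
        = coin (\<lambda>c. bind_pmf (outcome_dist b) (\<lambda>r. coin (\<lambda>f. ?L r (c \<noteq> f))))"
      using False by simp
    also have "\<dots> = bind_pmf (outcome_dist b) (\<lambda>r. coin (\<lambda>c. coin (\<lambda>f. ?L r (c \<noteq> f))))"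
      by (rule bind_commute_pmf)
    also have "\<dots> = bind_pmf (outcome_dist b) (\<lambda>r. coin (?L r))"
      by (simp only: xor)
    also have "\<dots> = local_run (m # ms) Und b"
      using False by (simp add: Cons.IH map_bind_pmf)
    finally show ?thesis by simp
  qed
qed

lemma local_run_Und_right: "local_run ms a Und = coin (\<lambda>c. local_run ms a (pot c))"
  using local_run_Und_left[of "map Not ms" a] by (simp add: local_run_swap)

text \<open>Two undetermined values are equivalent to a pair of uniformly random potential values with
  any prescribed correlation \<open>c\<close>: after the first measurement only one coin survives.\<close>

lemma local_run_Und_Und_True:
  "local_run (True # ms) Und Und = coin (\<lambda>b. local_run (True # ms) (pot b) (pot (b = c)))"
proof -
  have "local_run (True # ms) (pot b) (pot (b = c))
      = map_pmf ((#) (sign_of b)) (local_run ms (act (sign_of b)) Und)" for b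
  proof -
    have "local_run (True # ms) (pot b) (pot (b = c))
        = coin (\<lambda>f. map_pmf ((#) (sign_of b)) (local_run ms (act (sign_of b)) (pot ((b = c) \<noteq> f))))"
      by (simp add: bind_return_pmf)
    also have "\<dots> = coin (\<lambda>f. map_pmf ((#) (sign_of b)) (local_run ms (act (sign_of b)) (pot f)))"
      by (rule coin_xor)
    finally show ?thesis by (simp add: local_run_Und_right map_bind_pmf)
  qed
  moreover have "local_run (True # ms) Und Und
      = coin (\<lambda>b. map_pmf ((#) (sign_of b)) (local_run ms (act (sign_of b)) Und))"
    by (simp add: fair_sign_as_coin)
  ultimately show ?thesis by simp
qed

lemma local_run_Und_Und:
  "local_run ms Und Und = coin (\<lambda>b. local_run ms (pot b) (pot (b = c)))"
proof (cases ms)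
  case Nil
  then show ?thesis by simp
next
  case (Cons m ms')
  show ?thesis
  proof (cases m)
    case True
    then show ?thesis using Cons local_run_Und_Und_True by simp
  next
    case False
    then have "map Not ms = True # map Not ms'" using Cons by simp
    note swap = local_run_swap[of ms, unfolded this]
    have cancel: "((b = c) = c) = b" for b
      by (cases b; cases c) simp_all
    have "local_run ms Und Und = local_run (True # map Not ms') Und Und"
      by (rule swap[symmetric])
    also have "\<dots> = coin (\<lambda>b. local_run (True # map Not ms') (pot b) (pot (b = c)))"
      by (rule local_run_Und_Und_True)
    also have "\<dots> = coin (\<lambda>b. local_run (True # map Not ms') (pot (b = c)) (pot ((b = c) = c)))"
      by (rule coin_iff[of "\<lambda>x. local_run (True # map Not ms') (pot x) (pot (x = c))", symmetric])
    also have "\<dots> = coin (\<lambda>b. local_run ms (pot b) (pot (b = c)))"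
      by (simp only: swap cancel)
    finally show ?thesis .
  qed
qed

lemma local_run_Und_Und_shifted:
  "local_run ms Und Und = coin (\<lambda>b. local_run ms (pot (b = d)) (pot (b = c)))"
proof -
  have shift: "((b = d) = (d = c)) = (b = c)" for b
    by (cases b; cases c) simp_all
  have "local_run ms Und Und = coin (\<lambda>b. local_run ms (pot b) (pot (b = (d = c))))"
    by (rule local_run_Und_Und)
  also have "\<dots> = coin (\<lambda>b. local_run ms (pot (b = d)) (pot ((b = d) = (d = c))))"
    by (rule coin_iff[of "\<lambda>x. local_run ms (pot x) (pot (x = (d = c)))", symmetric])
  also have "\<dots> = coin (\<lambda>b. local_run ms (pot (b = d)) (pot (b = c)))"
    by (simp only: shift)
  finally show ?thesis .
qed

lemma partner_partner [simp]: "partner (partner X) = X"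
  by (cases X) simp_all

lemma partner_neq [simp]: "partner X \<noteq> X" "X \<noteq> partner X"
  by (cases X; simp)+

definition in_party :: "obs \<Rightarrow> obs \<Rightarrow> bool" where
  "in_party P X \<longleftrightarrow> X = P \<or> X = partner P"

definition post_state :: "obs \<Rightarrow> state \<Rightarrow> int \<Rightarrow> bool \<Rightarrow> state" where
  "post_state X s r f = (s(X := act r))(partner X := flip_when f (s (partner X)))"

lemma post_state_simps [simp]:
  "post_state X s r f X = act r"
  "post_state X s r f (partner X) = flip_when f (s (partner X))"
  "post_state (partner X) s r f X = flip_when f (s X)"
  "Y \<noteq> X \<Longrightarrow> Y \<noteq> partner X \<Longrightarrow> post_state X s r f Y = s Y"
  by (simp_all add: post_state_def)

lemma all_und_apply [simp]: "all_und X = Und"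
  by (cases X) (simp_all add: all_und_def mk_def)

lemma actual_value_not_all_und: "s X = act r \<Longrightarrow> s \<noteq> all_und"
  by (auto simp: act_def split: if_splits)

lemma post_state_not_all_und: "post_state X s r f \<noteq> all_und"
  by (rule actual_value_not_all_und[OF post_state_simps(1)])

lemma measure_pure_determined:
  assumes "s \<noteq> all_und"
  shows "measure_pure X s = bind_pmf (outcome_dist (s X))
           (\<lambda>r. map_pmf (\<lambda>f. (r, post_state X s r f)) (bernoulli_pmf (1/2)))"
  using assms by (simp add: measure_pure_def post_state_def flip_when_def)

lemma post_und_own_party [simp]:
  "post_und X r X = act r"  "post_und X r (partner X) = Und"  "post_und (partner X) r X = Und"
  by (cases X; simp add: mk_def act_def)+

lemma post_und_not_all_und: "post_und X r \<noteq> all_und"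
  by (rule actual_value_not_all_und[OF post_und_own_party(1)])

lemma post_und_other_party:
  assumes "Y \<noteq> P" "Y \<noteq> partner P"
  shows "\<exists>d c. \<forall>b. post_und Y (sign_of b) P = pot (b = d) \<and>
                    post_und Y (sign_of b) (partner P) = pot (b = c)"
proof (intro exI allI)
  fix b
  show "post_und Y (sign_of b) P = pot (b = (post_und Y 1 P = PotP)) \<and>
        post_und Y (sign_of b) (partner P) = pot (b = (post_und Y 1 (partner P) = PotP))"
    using assms by (cases Y; cases P; cases b) (simp_all add: mk_def sign_of_def pot_def)
qed

lemma run_pure_determined_step:
  assumes "s \<noteq> all_und"
  shows "run_pure (X # xs) s = bind_pmf (outcome_dist (s X))
           (\<lambda>r. coin (\<lambda>f. map_pmf ((#) r) (run_pure xs (post_state X s r f))))"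
  using assms by (simp add: measure_pure_determined bind_assoc_pmf bind_map_pmf bind_return_pmf map_pmf_def)

lemma run_pure_local_determined:
  assumes "\<forall>X\<in>set xs. in_party P X" and "s \<noteq> all_und"
  shows "run_pure xs s = local_run (map (\<lambda>X. X = P) xs) (s P) (s (partner P))"
  using assms
proof (induction xs arbitrary: s)
  case Nil
  then show ?case by simp
next
  case (Cons X xs)
  have IH: "run_pure xs (post_state X s r f) = local_run (map (\<lambda>X. X = P) xs)
              (post_state X s r f P) (post_state X s r f (partner P))" for r f
    using Cons.IH[OF _ post_state_not_all_und] Cons.prems(1) by simp
  have "X = P \<or> X = partner P"
    using Cons.prems(1) by (simp add: in_party_def)
  then show ?case
    unfolding run_pure_determined_step[OF Cons.prems(2)] IH by auto
qed

lemma run_pure_local: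
  assumes "\<forall>X\<in>set xs. in_party P X"
  shows "run_pure xs s = local_run (map (\<lambda>X. X = P) xs) (s P) (s (partner P))"
proof (cases "s = all_und")
  case False
  then show ?thesis by (rule run_pure_local_determined[OF assms])
next
  case True
  show ?thesis
  proof (cases xs)
    case Nil
    then show ?thesis by simp
  next
    case (Cons X xs')
    have "run_pure xs s = bind_pmf fair_sign (\<lambda>r. map_pmf ((#) r) (run_pure xs' (post_und X r)))"
      using True Cons by (simp add: measure_pure_def bind_map_pmf)
    also have "\<dots> = bind_pmf fair_sign (\<lambda>r. map_pmf ((#) r)
        (local_run (map (\<lambda>X. X = P) xs') (post_und X r P) (post_und X r (partner P))))"
      using run_pure_local_determined[of xs' P, OF _ post_und_not_all_und] Cons assms by simp
    also have "\<dots> = local_run (map (\<lambda>X. X = P) xs) (s P) (s (partner P))"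
      using Cons assms True by (auto simp: in_party_def)
    finally show ?thesis .
  qed
qed

lemma other_party_measurement_invisible:
  assumes Y: "\<not> in_party P Y" and ys: "\<forall>X\<in>set ys. in_party P X"
  shows "bind_pmf (measure_pure Y s) (\<lambda>(r, s'). run_pure ys s') = run_pure ys s"
proof -
  let ?ms = "map (\<lambda>X. X = P) ys"
  have local: "run_pure ys s' = local_run ?ms (s' P) (s' (partner P))" for s'
    by (rule run_pure_local[OF ys])
  have YP: "Y \<noteq> P" "Y \<noteq> partner P"
    using Y by (auto simp: in_party_def)
  show ?thesis
  proof (cases "s = all_und")
    case False
    have "P \<noteq> Y" "P \<noteq> partner Y" "partner P \<noteq> Y" "partner P \<noteq> partner Y"
      using YP by (metis partner_partner)+
    then have "post_state Y s r f P = s P" "post_state Y s r f (partner P) = s (partner P)" for r f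
      by simp_all
    then show ?thesis
      using False by (simp add: local measure_pure_determined bind_assoc_pmf bind_map_pmf bind_return_pmf)
  next
    case True
    obtain d c where dc: "\<And>b. post_und Y (sign_of b) P = pot (b = d) \<and>
                              post_und Y (sign_of b) (partner P) = pot (b = c)"
      using post_und_other_party[OF YP] by blast
    have "bind_pmf (measure_pure Y s) (\<lambda>(r, s'). run_pure ys s')
        = bind_pmf fair_sign (\<lambda>r. local_run ?ms (post_und Y r P) (post_und Y r (partner P)))"
      using True by (simp add: measure_pure_def bind_map_pmf local)
    also have "\<dots> = coin (\<lambda>b. local_run ?ms (pot (b = d)) (pot (b = c)))"
      using dc by (simp add: fair_sign_as_coin)
    also have "\<dots> = local_run ?ms Und Und"
      by (rule local_run_Und_Und_shifted[symmetric])
    also have "\<dots> = run_pure ys s"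
      using True by (simp add: local)
    finally show ?thesis .
  qed
qed

lemma party_outcomes_Cons:
  "party_outcomes Q (X # xs) (r # os) =
     (if Q X then r # party_outcomes Q xs os else party_outcomes Q xs os)"
  by (simp add: party_outcomes_def)

lemma party_marginal:
  "map_pmf (party_outcomes (in_party P) xs) (run_pure xs s) = run_pure (filter (in_party P) xs) s"
proof (induction xs arbitrary: s)
  case Nil
  then show ?case by (simp add: party_outcomes_def)
next
  case (Cons X xs)
  let ?Q = "in_party P"
  have unfold: "map_pmf (party_outcomes ?Q (X # xs)) (run_pure (X # xs) s)
      = bind_pmf (measure_pure X s) (\<lambda>(r, s').
          map_pmf (party_outcomes ?Q (X # xs) \<circ> (#) r) (run_pure xs s'))"
    by (simp add: map_bind_pmf pmf.map_comp case_prod_beta')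
  show ?case
  proof (cases "?Q X")
    case True
    have "map_pmf (\<lambda>os. r # party_outcomes ?Q xs os) (run_pure xs s')
        = map_pmf ((#) r) (run_pure (filter ?Q xs) s')" for r s'
      by (simp flip: Cons.IH add: pmf.map_comp o_def)
    with True show ?thesis
      unfolding unfold by (simp add: party_outcomes_Cons o_def)
  next
    case False
    have "map_pmf (party_outcomes ?Q (X # xs)) (run_pure (X # xs) s)
        = bind_pmf (measure_pure X s) (\<lambda>(r, s'). run_pure (filter ?Q xs) s')"
      unfolding unfold using False by (simp add: party_outcomes_Cons o_def Cons.IH)
    also have "\<dots> = run_pure (filter ?Q xs) s"
      by (rule other_party_measurement_invisible) (use False in auto)
    finally show ?thesis
      using False by simp
  qed
qed

theorem mainTheorem4:
  fixes p :: "state pmf" and ys xs :: "obs list"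
  shows "(filter is_Bob xs = ys \<longrightarrow>
            map_pmf (party_outcomes is_Bob xs) (run xs p) = run ys p)
       \<and> (filter is_Alice xs = ys \<longrightarrow>
            map_pmf (party_outcomes is_Alice xs) (run xs p) = run ys p)"
proof -
  have marginal: "map_pmf (party_outcomes (in_party P) xs) (run xs p) = run (filter (in_party P) xs) p"
    for P by (simp add: run_def map_bind_pmf party_marginal)
  have parties: "is_Bob = in_party B1" "is_Alice = in_party A1"
    by (auto simp: fun_eq_iff is_Bob_def is_Alice_def in_party_def)
  show ?thesis
    unfolding parties marginal by simp
qed

end
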